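(* Let $A$ be a subset of a Hausdorff topological vector space over $\mathbb{R}$. Consider: (i) $A$ is topologically linearly independent; (ii) $A$ is topologically independent; (iii) $A$ is linearly independent. Then (i) implies (ii) and (ii) implies (iii). Moreover, if $A$ is finite, then (i), (ii), (iii) are equivalent.
   Context: Let $X$ be a topological vector space with zero $0$. A subset $A\subseteq X\setminus\{0\}$ is topologically linearly independent if for every neighborhood $W$ of $0$ there is a neighborhood $U$ of $0$ such that for every finite $F\subseteq A$ and reals $\{r_a: a\in F\}$, $\sum_{a\in F}r_a a\in U$ implies $r_a a\in W$ for all $a\in F$. A subset $A\subseteq X\setminus\{0\}$ is topologically independent if the same holds with the reals $r_a$ replaced by integers $z_a$. *)

theory Defs
  imports "HOL-Analysis.Analysis"
begin

definition tvs :: "'a::{real_vector, topological_space} itself \<Rightarrow> bool" where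
  "tvs _ \<longleftrightarrow>
     continuous_on UNIV (\<lambda>p::'a \<times> 'a. fst p + snd p) \<and>
     continuous_on UNIV (\<lambda>p::real \<times> 'a. fst p *\<^sub>R snd p)"

definition nbhd0 :: "'a::{real_vector, topological_space} set \<Rightarrow> bool" where
  "nbhd0 W \<longleftrightarrow> (\<exists>V. open V \<and> 0 \<in> V \<and> V \<subseteq> W)"

definition top_lin_indep :: "'a::{real_vector, topological_space} set \<Rightarrow> bool" where
  "top_lin_indep A \<longleftrightarrow> A \<subseteq> UNIV - {0} \<and>
     (\<forall>W. nbhd0 W \<longrightarrow> (\<exists>U. nbhd0 U \<and>
        (\<forall>F (r::'a \<Rightarrow> real). finite F \<longrightarrow> F \<subseteq> A \<longrightarrow>
            (\<Sum>a\<in>F. r a *\<^sub>R a) \<in> U \<longrightarrow> (\<forall>a\<in>F. r a *\<^sub>R a \<in> W))))"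

definition top_indep :: "'a::{real_vector, topological_space} set \<Rightarrow> bool" where
  "top_indep A \<longleftrightarrow> A \<subseteq> UNIV - {0} \<and>
     (\<forall>W. nbhd0 W \<longrightarrow> (\<exists>U. nbhd0 U \<and>
        (\<forall>F (z::'a \<Rightarrow> int). finite F \<longrightarrow> F \<subseteq> A \<longrightarrow>
            (\<Sum>a\<in>F. of_int (z a) *\<^sub>R a) \<in> U \<longrightarrow> (\<forall>a\<in>F. of_int (z a) *\<^sub>R a \<in> W))))"

end

theory Submission
  imports Defs
begin

text \<open>
Integer coefficients are as good as real ones up to small errors: by Dirichlet's simultaneous
approximation theorem, any real linear dependence among finitely many vectors has an integer
multiple whose coefficients are all close to integers.  The corresponding integer combination
is then close to 0 although one of its terms is a nonzero integer multiple of a fixed vector,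
which topological independence forbids.

Conversely, for a finite independent set \<open>A\<close> the image of the unit sphere of the sup norm on
\<open>\<real>\<^sup>A\<close> under \<open>t \<mapsto> \<Sum>a\<in>A. t a *\<^sub>R a\<close> is compact and misses 0.  A balanced neighbourhood of 0
avoiding it contains only combinations whose coefficients are all smaller than 1 in absolute
value, and rescaling this neighbourhood gives topological linear independence.
\<close>

lemma tvs_continuous_on_add:
  fixes f g :: "'b::topological_space \<Rightarrow> 'a::{real_vector,topological_space}"
  assumes "tvs TYPE('a)" "continuous_on S f" "continuous_on S g"
  shows "continuous_on S (\<lambda>x. f x + g x)"
proof -
  have "continuous_on UNIV (\<lambda>p::'a \<times> 'a. fst p + snd p)"
    using assms(1) by (simp add: tvs_def)
  from continuous_on_compose2[OF this continuous_on_Pair[OF assms(2,3)]] show ?thesis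
    by simp
qed

lemma tvs_continuous_on_scaleR:
  fixes f :: "'b::topological_space \<Rightarrow> real" and g :: "'b \<Rightarrow> 'a::{real_vector,topological_space}"
  assumes "tvs TYPE('a)" "continuous_on S f" "continuous_on S g"
  shows "continuous_on S (\<lambda>x. f x *\<^sub>R g x)"
proof -
  have "continuous_on UNIV (\<lambda>p::real \<times> 'a. fst p *\<^sub>R snd p)"
    using assms(1) by (simp add: tvs_def)
  from continuous_on_compose2[OF this continuous_on_Pair[OF assms(2,3)]] show ?thesis
    by simp
qed

lemma tvs_continuous_on_sum:
  fixes f :: "'i \<Rightarrow> 'b::topological_space \<Rightarrow> 'a::{real_vector,topological_space}"
  assumes "tvs TYPE('a)" "\<And>i. i \<in> I \<Longrightarrow> continuous_on S (f i)"
  shows "continuous_on S (\<lambda>x. \<Sum>i\<in>I. f i x)"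
  using assms(2)
proof (induction I rule: infinite_finite_induct)
  case (insert i I)
  thus ?case by (simp add: tvs_continuous_on_add[OF assms(1)])
qed auto

lemma tvs_add_nbhd:
  fixes U :: "'a::{real_vector,topological_space} set"
  assumes "tvs TYPE('a)" "open U" "0 \<in> U"
  obtains V where "open V" "0 \<in> V" "\<And>x y. x \<in> V \<Longrightarrow> y \<in> V \<Longrightarrow> x + y \<in> U"
proof -
  have "open ((\<lambda>p::'a \<times> 'a. fst p + snd p) -` U)"
    using assms by (simp add: tvs_def open_vimage)
  moreover have "(0, 0) \<in> (\<lambda>p::'a \<times> 'a. fst p + snd p) -` U"
    using assms(3) by simp
  ultimately obtain P Q where "open P" "open Q" "(0, 0) \<in> P \<times> Q"
    "P \<times> Q \<subseteq> (\<lambda>p::'a \<times> 'a. fst p + snd p) -` U"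
    by (rule open_prod_elim)
  thus ?thesis by (intro that[of "P \<inter> Q"]) auto
qed

lemma tvs_scaleR_nbhd:
  fixes V :: "'a::{real_vector,topological_space} set"
  assumes "tvs TYPE('a)" "open V" "0 \<in> V"
  obtains d Q where "d > 0" "open Q" "x \<in> Q" "\<And>t y. \<bar>t\<bar> < d \<Longrightarrow> y \<in> Q \<Longrightarrow> t *\<^sub>R y \<in> V"
proof -
  have "open ((\<lambda>p::real \<times> 'a. fst p *\<^sub>R snd p) -` V)"
    using assms by (simp add: tvs_def open_vimage)
  moreover have "(0, x) \<in> (\<lambda>p::real \<times> 'a. fst p *\<^sub>R snd p) -` V"
    using assms(3) by simp
  ultimately obtain P Q where PQ: "open P" "open Q" "(0, x) \<in> P \<times> Q"
    "P \<times> Q \<subseteq> (\<lambda>p::real \<times> 'a. fst p *\<^sub>R snd p) -` V"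
    by (rule open_prod_elim)
  then obtain d where d: "d > 0" "ball 0 d \<subseteq> P"
    by (meson SigmaD1 open_contains_ball)
  show ?thesis
  proof (rule that[OF d(1) PQ(2)])
    show "x \<in> Q" using PQ(3) by simp
    fix t y assume "\<bar>t\<bar> < d" "y \<in> Q"
    hence "(t, y) \<in> P \<times> Q" using d(2) by (auto simp: dist_real_def)
    thus "t *\<^sub>R y \<in> V" using PQ(4) by auto
  qed
qed

lemma tvs_balanced_nbhd:
  fixes V :: "'a::{real_vector,topological_space} set"
  assumes "tvs TYPE('a)" "open V" "0 \<in> V"
  obtains W where "open W" "0 \<in> W" "W \<subseteq> V" "\<And>x s. x \<in> W \<Longrightarrow> \<bar>s\<bar> \<le> 1 \<Longrightarrow> s *\<^sub>R x \<in> W"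
proof -
  obtain d W0 where d: "d > 0" "open W0" "0 \<in> W0"
    and small: "\<And>t x. \<bar>t\<bar> < d \<Longrightarrow> x \<in> W0 \<Longrightarrow> t *\<^sub>R x \<in> V"
    by (rule tvs_scaleR_nbhd[OF assms, of 0]) blast
  define W where "W = (\<Union>t\<in>{t. 0 < \<bar>t\<bar> \<and> \<bar>t\<bar> < d}. (\<lambda>y. (1/t) *\<^sub>R y) -` W0)"
  have "continuous_on UNIV (\<lambda>y::'a. (1/t) *\<^sub>R y)" for t
    by (intro tvs_continuous_on_scaleR[OF assms(1)] continuous_on_const continuous_on_id)
  hence "open W"
    unfolding W_def using d(2) by (intro open_UN ballI open_vimage)
  moreover have "0 \<in> W"
    unfolding W_def using d by (intro UN_I[of "d/2"]) auto
  moreover have "W \<subseteq> V"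
  proof
    fix y assume "y \<in> W"
    then obtain t where t: "0 < \<bar>t\<bar>" "\<bar>t\<bar> < d" "(1/t) *\<^sub>R y \<in> W0"
      unfolding W_def by auto
    from small[OF t(2,3)] t(1) show "y \<in> V" by simp
  qed
  moreover have "s *\<^sub>R x \<in> W" if x: "x \<in> W" and s: "\<bar>s\<bar> \<le> 1" for x s
  proof (cases "s = 0")
    case True
    with \<open>0 \<in> W\<close> show ?thesis by simp
  next
    case False
    from x obtain t where t: "0 < \<bar>t\<bar>" "\<bar>t\<bar> < d" "(1/t) *\<^sub>R x \<in> W0"
      unfolding W_def by auto
    have "\<bar>s * t\<bar> \<le> \<bar>t\<bar>"
      using s by (simp add: abs_mult mult_left_le_one_le)
    hence "s * t \<in> {t. 0 < \<bar>t\<bar> \<and> \<bar>t\<bar> < d}"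
      using t False by auto
    moreover have "(1 / (s * t)) *\<^sub>R (s *\<^sub>R x) = (1/t) *\<^sub>R x"
      using False by simp
    ultimately show ?thesis
      unfolding W_def using t(3) by (intro UN_I[of "s * t"]) auto
  qed
  ultimately show ?thesis using that by blast
qed

lemma tvs_small_combination:
  fixes U :: "'a::{real_vector,topological_space} set"
  assumes "tvs TYPE('a)" "finite F" "open U" "0 \<in> U"
  shows "\<exists>e>0. \<forall>r. (\<forall>a\<in>F. \<bar>r a\<bar> \<le> e) \<longrightarrow> (\<Sum>a\<in>F. r a *\<^sub>R a) \<in> U"
  using assms(2-4)
proof (induction F arbitrary: U rule: finite_induct)
  case empty
  thus ?case by (intro exI[of _ 1]) auto
next
  case (insert b F)
  obtain V where V: "open V" "0 \<in> V" "\<And>x y. x \<in> V \<Longrightarrow> y \<in> V \<Longrightarrow> x + y \<in> U"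
    by (rule tvs_add_nbhd[OF assms(1) insert.prems]) blast
  obtain e1 Q where e1: "e1 > 0" "b \<in> Q" "\<And>t y. \<bar>t\<bar> < e1 \<Longrightarrow> y \<in> Q \<Longrightarrow> t *\<^sub>R y \<in> V"
    by (rule tvs_scaleR_nbhd[OF assms(1) V(1,2), of b]) blast
  obtain e2 where e2: "e2 > 0" "\<forall>r. (\<forall>a\<in>F. \<bar>r a\<bar> \<le> e2) \<longrightarrow> (\<Sum>a\<in>F. r a *\<^sub>R a) \<in> V"
    using insert.IH[OF V(1,2)] by (elim exE conjE)
  have "(\<Sum>a\<in>insert b F. r a *\<^sub>R a) \<in> U" if r: "\<forall>a\<in>insert b F. \<bar>r a\<bar> \<le> min (e1/2) e2" for r
  proof -
    have "\<bar>r b\<bar> < e1" using r e1(1) by force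
    hence "r b *\<^sub>R b \<in> V" using e1(2,3) by blast
    moreover have "(\<Sum>a\<in>F. r a *\<^sub>R a) \<in> V" using r e2(2) by auto
    ultimately show ?thesis using insert.hyps V(3) by simp
  qed
  moreover have "min (e1/2) e2 > 0" using e1(1) e2(1) by simp
  ultimately show ?case by blast
qed

lemma compact_PiE:
  fixes S :: "'i \<Rightarrow> 'b::topological_space set"
  assumes "\<And>i. i \<in> I \<Longrightarrow> compact (S i)"
  shows "compact (Pi\<^sub>E I S)"
proof -
  have "Pi\<^sub>E I S = Pi\<^sub>E UNIV (\<lambda>i. if i \<in> I then S i else {undefined})"
    by (auto simp: PiE_def extensional_def Pi_def split: if_splits)
  moreover have "compactin (product_topology (\<lambda>i. euclidean) UNIV)
                   (Pi\<^sub>E UNIV (\<lambda>i. if i \<in> I then S i else {undefined}))"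
    using assms by (auto simp: compactin_PiE)
  ultimately show ?thesis by (simp add: euclidean_product_topology)
qed

text \<open>Its elements are extensional (\<open>undefined\<close>
outside \<open>I\<close>), which is what makes it compact in the product topology on \<open>'i \<Rightarrow> real\<close>.\<close>

definition sup_sphere :: "'i set \<Rightarrow> ('i \<Rightarrow> real) set" where
  "sup_sphere I = {t \<in> Pi\<^sub>E I (\<lambda>_. {-1..1}). \<exists>i\<in>I. \<bar>t i\<bar> = 1}"

lemma compact_sup_sphere:
  fixes I :: "'i set"
  assumes "finite I"
  shows "compact (sup_sphere I)"
proof -
  have "compact (Pi\<^sub>E I (\<lambda>_. {-1..1::real}))"
    by (rule compact_PiE) simp
  moreover have "closed (\<Union>i\<in>I. {t :: 'i \<Rightarrow> real. \<bar>t i\<bar> = 1})"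
    using assms by (intro closed_UN ballI closed_Collect_eq continuous_intros
                          continuous_on_product_coordinates)
  moreover have "sup_sphere I = Pi\<^sub>E I (\<lambda>_. {-1..1}) \<inter> (\<Union>i\<in>I. {t. \<bar>t i\<bar> = 1})"
    by (auto simp: sup_sphere_def)
  ultimately show ?thesis by (simp add: compact_Int_closed)
qed

lemma independent_coeff_bound_nbhd:
  fixes A :: "'a::{real_vector,t2_space} set"
  assumes tv: "tvs TYPE('a)" and fin: "finite A" and ind: "independent A"
  obtains B where "open B" "0 \<in> B" "\<And>t. (\<Sum>a\<in>A. t a *\<^sub>R a) \<in> B \<Longrightarrow> \<forall>a\<in>A. \<bar>t a\<bar> < 1"
proof -
  define S where "S = (\<lambda>t. \<Sum>a\<in>A. t a *\<^sub>R a) ` sup_sphere A"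
  have "continuous_on UNIV (\<lambda>t::'a \<Rightarrow> real. \<Sum>a\<in>A. t a *\<^sub>R a)"
    by (intro tvs_continuous_on_sum[OF tv] tvs_continuous_on_scaleR[OF tv]
              continuous_on_product_coordinates continuous_on_const)
  hence "compact S"
    unfolding S_def
    using compact_continuous_image continuous_on_subset compact_sup_sphere[OF fin] by blast
  hence "open (- S)" by (simp add: compact_imp_closed open_Compl)
  moreover have "0 \<in> - S"
  proof
    assume "0 \<in> S"
    then obtain t where t: "t \<in> sup_sphere A" "(\<Sum>a\<in>A. t a *\<^sub>R a) = 0"
      unfolding S_def by auto
    then obtain b where "b \<in> A" "t b \<noteq> 0"
      unfolding sup_sphere_def by auto
    with fin t(2) have "dependent A"
      unfolding dependent_explicit by blast
    with ind show False by simp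
  qed
  ultimately obtain B where B: "open B" "0 \<in> B" "B \<subseteq> - S"
    and balanced: "\<And>x s. x \<in> B \<Longrightarrow> \<bar>s\<bar> \<le> 1 \<Longrightarrow> s *\<^sub>R x \<in> B"
    by (rule tvs_balanced_nbhd[OF tv]) blast
  have bound: "\<forall>a\<in>A. \<bar>t a\<bar> < 1" if tB: "(\<Sum>a\<in>A. t a *\<^sub>R a) \<in> B" for t
  proof (rule ccontr)
    assume "\<not> (\<forall>a\<in>A. \<bar>t a\<bar> < 1)"
    then obtain c where c: "c \<in> A" "\<bar>t c\<bar> \<ge> 1" by auto
    define m where "m = Max ((\<lambda>a. \<bar>t a\<bar>) ` A)"
    have le_m: "\<bar>t a\<bar> \<le> m" if "a \<in> A" for a
      unfolding m_def using fin that by auto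
    have "m \<in> (\<lambda>a. \<bar>t a\<bar>) ` A"
      unfolding m_def using fin c by (intro Max_in) auto
    then obtain b where b: "b \<in> A" "\<bar>t b\<bar> = m" by auto
    have "m \<ge> 1" using le_m c by force
    define s where "s = restrict (\<lambda>a. t a / m) A"
    have "t a / m \<in> {-1..1}" if "a \<in> A" for a
      using le_m[OF that] \<open>m \<ge> 1\<close> by (auto simp: abs_le_iff field_simps)
    hence "s \<in> sup_sphere A"
      unfolding sup_sphere_def s_def using b \<open>m \<ge> 1\<close> by (auto intro!: bexI[of _ b])
    hence "(\<Sum>a\<in>A. s a *\<^sub>R a) \<in> S"
      unfolding S_def by (rule imageI)
    moreover have "(\<Sum>a\<in>A. s a *\<^sub>R a) = (1/m) *\<^sub>R (\<Sum>a\<in>A. t a *\<^sub>R a)"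
      by (simp add: s_def scaleR_sum_right)
    moreover have "(1/m) *\<^sub>R (\<Sum>a\<in>A. t a *\<^sub>R a) \<in> B"
      using balanced[OF tB] \<open>m \<ge> 1\<close> by simp
    ultimately show False using B(3) by auto
  qed
  show ?thesis by (rule that[OF B(1,2) bound])
qed

lemma independent_imp_top_lin_indep:
  fixes A :: "'a::{real_vector,t2_space} set"
  assumes tv: "tvs TYPE('a)" and fin: "finite A" and ind: "independent A"
  shows "top_lin_indep A"
  unfolding top_lin_indep_def
proof (intro conjI allI impI)
  show "A \<subseteq> UNIV - {0}" using ind dependent_zero by blast
  fix W :: "'a set" assume "nbhd0 W"
  then obtain W1 where W1: "open W1" "0 \<in> W1" "W1 \<subseteq> W" unfolding nbhd0_def by auto
  obtain e where e: "e > 0" "\<forall>r. (\<forall>a\<in>A. \<bar>r a\<bar> \<le> e) \<longrightarrow> (\<Sum>a\<in>A. r a *\<^sub>R a) \<in> W1"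
    using tvs_small_combination[OF tv fin W1(1,2)] by (elim exE conjE)
  obtain B where B: "open B" "0 \<in> B"
    and bound: "\<And>t. (\<Sum>a\<in>A. t a *\<^sub>R a) \<in> B \<Longrightarrow> \<forall>a\<in>A. \<bar>t a\<bar> < 1"
    by (rule independent_coeff_bound_nbhd[OF tv fin ind]) blast
  define U where "U = (\<lambda>x. (1/e) *\<^sub>R x) -` B"
  have "open U"
    unfolding U_def using B(1)
    by (intro open_vimage tvs_continuous_on_scaleR[OF tv] continuous_on_const continuous_on_id)
  show "\<exists>U. nbhd0 U \<and> (\<forall>F r. finite F \<longrightarrow> F \<subseteq> A \<longrightarrow>
                     (\<Sum>a\<in>F. r a *\<^sub>R a) \<in> U \<longrightarrow> (\<forall>a\<in>F. r a *\<^sub>R a \<in> W))"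
  proof (intro exI[of _ U] conjI allI impI ballI)
    show "nbhd0 U"
      using \<open>open U\<close> B(2) unfolding U_def nbhd0_def by auto
    fix F r c
    assume F: "finite F" "F \<subseteq> A" "(\<Sum>a\<in>F. r a *\<^sub>R a) \<in> U" and "c \<in> F"
    define t where "t a = (if a \<in> F then r a / e else 0)" for a
    have "(\<Sum>a\<in>A. t a *\<^sub>R a) = (\<Sum>a\<in>F. t a *\<^sub>R a)"
      using fin F(2) by (intro sum.mono_neutral_right) (auto simp: t_def)
    also have "\<dots> = (1/e) *\<^sub>R (\<Sum>a\<in>F. r a *\<^sub>R a)"
      by (simp add: t_def scaleR_sum_right)
    finally have "\<bar>t c\<bar> < 1"
      using bound F(2,3) \<open>c \<in> F\<close> unfolding U_def by auto
    hence "\<bar>r c\<bar> \<le> e"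
      using \<open>c \<in> F\<close> e(1) by (simp add: t_def abs_divide)
    have "c \<in> A" using \<open>c \<in> F\<close> F(2) by blast
    have "(\<Sum>a\<in>A. (if a = c then r c else 0) *\<^sub>R a) \<in> W1"
      using e(2)[rule_format, of "\<lambda>a. if a = c then r c else 0"] e(1) \<open>\<bar>r c\<bar> \<le> e\<close> by simp
    moreover have "(\<Sum>a\<in>A. (if a = c then r c else 0) *\<^sub>R a) = r c *\<^sub>R c"
      using fin \<open>c \<in> A\<close> by (simp add: if_distrib[of "\<lambda>s. s *\<^sub>R _"] cong: if_cong)
    ultimately show "r c *\<^sub>R c \<in> W"
      using W1(3) by auto
  qed
qed

lemma top_lin_indep_imp_top_indep:
  assumes "top_lin_indep A"
  shows "top_indep A"
  unfolding top_indep_def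
proof (intro conjI allI impI)
  show "A \<subseteq> UNIV - {0}" using assms by (simp add: top_lin_indep_def)
  fix W :: "'a set" assume "nbhd0 W"
  obtain U where "nbhd0 U" and U: "\<forall>F r. finite F \<longrightarrow> F \<subseteq> A \<longrightarrow>
                         (\<Sum>a\<in>F. r a *\<^sub>R a) \<in> U \<longrightarrow> (\<forall>a\<in>F. r a *\<^sub>R a \<in> W)"
    using assms[unfolded top_lin_indep_def, THEN conjunct2, rule_format, OF \<open>nbhd0 W\<close>]
    by (elim exE conjE)
  have "\<forall>a\<in>F. of_int (z a) *\<^sub>R a \<in> W"
    if "finite F" "F \<subseteq> A" "(\<Sum>a\<in>F. of_int (z a) *\<^sub>R a) \<in> U" for F and z :: "'a \<Rightarrow> int"
    using U[rule_format, of F "\<lambda>a. of_int (z a)"] that by simp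
  with \<open>nbhd0 U\<close> show "\<exists>U. nbhd0 U \<and> (\<forall>F (z::'a \<Rightarrow> int). finite F \<longrightarrow> F \<subseteq> A \<longrightarrow>
               (\<Sum>a\<in>F. of_int (z a) *\<^sub>R a) \<in> U \<longrightarrow> (\<forall>a\<in>F. of_int (z a) *\<^sub>R a \<in> W))"
    by blast
qed

lemma Dirichlet_approx_finite_set:
  fixes u :: "'i \<Rightarrow> real"
  assumes "finite T" "e > 0"
  obtains q :: int and z :: "'i \<Rightarrow> int"
    where "q > 0" "\<And>a. a \<in> T \<Longrightarrow> \<bar>of_int (z a) - of_int q * u a\<bar> < e"
proof -
  obtain g where g: "bij_betw g {0..<card T} T"
    using ex_bij_betw_nat_finite[OF assms(1)] by blast
  define N where "N = nat \<lceil>1/e\<rceil> + 1"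
  have "N > 0" unfolding N_def by simp
  have "1/e \<le> real N" unfolding N_def by linarith
  hence Ne: "1 / real N \<le> e" using assms(2) \<open>N > 0\<close> by (simp add: field_simps)
  obtain q p where qp: "0 < q" "q \<le> int (N ^ card T)"
    "\<And>i. i < card T \<Longrightarrow> \<bar>of_int q * u (g i) - of_int (p i)\<bar> < 1 / real N"
    by (rule Dirichlet_approx_simult[OF \<open>N > 0\<close>, where \<theta> = "\<lambda>i. u (g i)" and n = "card T"]) iprover
  show ?thesis
  proof (rule that[of q "\<lambda>a. p (inv_into {0..<card T} g a)"])
    fix a assume "a \<in> T"
    hence "a \<in> g ` {0..<card T}"
      using g by (simp add: bij_betw_def)
    then obtain i where "i < card T" "a = g i" by auto
    moreover from this have "inv_into {0..<card T} g a = i"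
      using bij_betw_inv_into_left[OF g] by simp
    ultimately show "\<bar>of_int (p (inv_into {0..<card T} g a)) - of_int q * u a\<bar> < e"
      using qp(3) Ne by (fastforce simp: abs_minus_commute)
  qed (use qp in simp)
qed

lemma tvs_int_combination_near_zero:
  fixes T :: "'a::{real_vector,topological_space} set"
  assumes tv: "tvs TYPE('a)" and "finite T" and dep: "(\<Sum>a\<in>T. u a *\<^sub>R a) = 0"
    and "v \<in> T" "u v \<noteq> 0" and "open U" "0 \<in> U"
  obtains q :: int and z :: "'a \<Rightarrow> int"
    where "q > 0" "z v = q" "(\<Sum>a\<in>T. of_int (z a) *\<^sub>R a) \<in> U"
proof -
  obtain e where e: "e > 0" "\<forall>r. (\<forall>a\<in>T. \<bar>r a\<bar> \<le> e) \<longrightarrow> (\<Sum>a\<in>T. r a *\<^sub>R a) \<in> U"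
    using tvs_small_combination[OF tv \<open>finite T\<close> \<open>open U\<close> \<open>0 \<in> U\<close>] by (elim exE conjE)
  have "min e 1 > 0" using e(1) by simp
  then obtain q z where q: "q > 0"
    and z: "\<And>a. a \<in> T \<Longrightarrow> \<bar>of_int (z a) - of_int q * (u a / u v)\<bar> < min e 1"
    by (rule Dirichlet_approx_finite_set[OF \<open>finite T\<close>, where u = "\<lambda>a. u a / u v"]) blast
  have "\<bar>of_int (z v - q)\<bar> < (1::real)"
    using z[OF \<open>v \<in> T\<close>] \<open>u v \<noteq> 0\<close> by simp
  hence "z v = q" by linarith
  have close: "\<bar>of_int (z a) - of_int q * (u a / u v)\<bar> \<le> e" if "a \<in> T" for a
    using z[OF that] by (simp add: min_less_iff_conj)
  have "(\<Sum>a\<in>T. of_int (z a) *\<^sub>R a)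
        = (\<Sum>a\<in>T. of_int (z a) *\<^sub>R a) - (of_int q / u v) *\<^sub>R (\<Sum>a\<in>T. u a *\<^sub>R a)"
    using dep by simp
  also have "\<dots> = (\<Sum>a\<in>T. (of_int (z a) - of_int q * (u a / u v)) *\<^sub>R a)"
    by (simp add: scaleR_diff_left sum_subtractf scaleR_sum_right)
  also have "\<dots> \<in> U"
    using spec[OF e(2), of "\<lambda>a. of_int (z a) - of_int q * (u a / u v)"] close by auto
  finally show ?thesis using q \<open>z v = q\<close> that by blast
qed

lemma top_indep_imp_independent:
  fixes A :: "'a::{real_vector,t1_space} set"
  assumes tv: "tvs TYPE('a)" and ti: "top_indep A"
  shows "independent A"
proof
  assume "dependent A"
  then obtain T u v where T: "finite T" "T \<subseteq> A" "(\<Sum>a\<in>T. u a *\<^sub>R a) = 0" "v \<in> T" "u v \<noteq> 0"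
    unfolding dependent_explicit by blast
  have "v \<noteq> 0" using ti T unfolding top_indep_def by auto
  hence "open (- {v})" "0 \<in> - {v}" by auto
  then obtain W where W: "open W" "0 \<in> W" "W \<subseteq> - {v}"
    and balanced: "\<And>x s. x \<in> W \<Longrightarrow> \<bar>s\<bar> \<le> 1 \<Longrightarrow> s *\<^sub>R x \<in> W"
    by (rule tvs_balanced_nbhd[OF tv]) blast
  hence "nbhd0 W" unfolding nbhd0_def by blast
  obtain U where "nbhd0 U" and U: "\<forall>F (z::'a \<Rightarrow> int). finite F \<longrightarrow> F \<subseteq> A \<longrightarrow>
         (\<Sum>a\<in>F. of_int (z a) *\<^sub>R a) \<in> U \<longrightarrow> (\<forall>a\<in>F. of_int (z a) *\<^sub>R a \<in> W)"
    using ti[unfolded top_indep_def, THEN conjunct2, rule_format, OF \<open>nbhd0 W\<close>]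
    by (elim exE conjE)
  then obtain U0 where U0: "open U0" "0 \<in> U0" "U0 \<subseteq> U" unfolding nbhd0_def by auto
  obtain q z where q: "q > 0" and "z v = q" and "(\<Sum>a\<in>T. of_int (z a) *\<^sub>R a) \<in> U0"
    by (rule tvs_int_combination_near_zero[OF tv T(1,3,4,5) U0(1,2)]) blast
  hence "of_int q *\<^sub>R v \<in> W"
    using U U0(3) T(1,2,4) by blast
  hence "(1 / of_int q) *\<^sub>R (of_int q *\<^sub>R v) \<in> W"
    by (rule balanced) (use q in simp)
  hence "v \<in> W" using q by simp
  with W(3) show False by auto
qed

theorem lemma3p3:
  fixes A :: "'a::{real_vector, t2_space} set"
  assumes "tvs TYPE('a)"
  shows "(top_lin_indep A \<longrightarrow> top_indep A) \<and>
         (top_indep A \<longrightarrow> independent A) \<and>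
         (finite A \<longrightarrow> (top_lin_indep A \<longleftrightarrow> top_indep A) \<and> (top_indep A \<longleftrightarrow> independent A))"
  using top_lin_indep_imp_top_indep top_indep_imp_independent[OF assms]
    independent_imp_top_lin_indep[OF assms] by blast

end
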